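(* Let $n\geq 1$ and let $\pi\in S_n$ be a 321-avoiding permutation. Let $A_\pi$ be the linear Nakayama algebra (with $n+1$ simple modules) associated to $\pi$. Then the number of indecomposable projective $A_\pi$-modules (up to isomorphism) of injective dimension exactly one equals the number of fixed points of $\pi$.
   Context: $K$ is a field. A linear Nakayama algebra with $m$ simple modules is a (connected) algebra $A=KQ/I$ with $Q$ the linearly oriented quiver $0\to 1\to\cdots\to m-1$ and $I$ an admissible ideal; modules are finite-dimensional right modules, $e_i$ are the primitive idempotents, $S_i$ the simple modules. The indecomposable projective $e_iA$ is uniserial with composition factors $S_i,S_{i+1},\dots,S_{i+c_i-1}$ (top to socle), where $c_i=\dim_K e_iA$; $A$ is determined up to isomorphism by its Kupisch series $[c_0,\dots,c_{m-1}]$, and every indecomposable module is isomorphic to $e_iA/e_iJ^k$ for some $i$ and $1\le k\le c_i$ ($J$ the Jacobson radical). To such $A$ with $m=n+1$ simple modules one associates the Dyck path $\mathcal D_A$ of semilength $n$ (the top boundary of its Auslander–Reiten quiver): the lattice path from $(0,0)$ to $(2n,0)$ whose vertex with first coordinate $x$ has height $h(x)=\max\{k-1 : 0\le i\le n,\ 1\le k\le c_i,\ 2i+k-1=2n-x\}$. This gives a bijection between isomorphism classes of linear Nakayama algebras with $n+1$ simple modules and Dyck paths of semilength $n$ (paths with steps $u=(1,1)$, $d=(1,-1)$ from $(0,0)$ to $(2n,0)$ never going below $y=0$). Billey–Jockusch–Stanley bijection: write a Dyck path of semilength $n$ as $u^{a_1}d^{d_1}u^{a_2}d^{d_2}\cdots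 u^{a_\ell}d^{d_\ell}$ with all $a_i,d_i\ge 1$; set $A_j=a_1+\dots+a_j$ and $D_j=d_1+\dots+d_j$ for $1\le j\le \ell-1$. Define $\pi(D_j)=A_j+1$ for $1\le j\le\ell-1$, and fill the remaining positions $[n]\setminus\{D_1,\dots,D_{\ell-1}\}$ in increasing order with the remaining values $[n]\setminus\{A_1+1,\dots,A_{\ell-1}+1\}$. This is a bijection from Dyck paths of semilength $n$ to 321-avoiding permutations of $[n]$ (permutations with no $i<j<k$ and $\pi(k)<\pi(j)<\pi(i)$). $A_\pi$ denotes the linear Nakayama algebra whose Dyck path $\mathcal D_{A_\pi}$ is mapped to $\pi$ by this bijection. *)

theory Defs
  imports "HOL-Combinatorics.Permutations"
begin

text \<open>A linear Nakayama algebra with m simple modules is encoded (up to isomorphism)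
by its Kupisch series, a list c of length m with c!i = dim e_i A.
Connectedness and admissibility of the ideal amount to: the last entry is 1,
all other entries are at least 2, and c!(i+1) \<ge> c!i - 1.\<close>

definition kupisch :: "nat list \<Rightarrow> bool" where
  "kupisch c \<longleftrightarrow> c \<noteq> [] \<and> last c = 1 \<and>
     (\<forall>i. Suc i < length c \<longrightarrow> c!i \<ge> 2 \<and> c!(Suc i) + 1 \<ge> c!i)"

text \<open>Indecomposable modules e_iA/e_iJ^k are encoded as pairs (i,k), with composition
factors S_i,...,S_(i+k-1); k = 0 encodes the zero module.\<close>

definition ind_module :: "nat list \<Rightarrow> nat \<times> nat \<Rightarrow> bool" where
  "ind_module c M \<longleftrightarrow> fst M < length c \<and> 1 \<le> snd M \<and> snd M \<le> c ! fst M"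

text \<open>The injective envelope I(s) of S_s is the longest uniserial module with socle S_s,
namely (i0, s - i0 + 1) where i0 is the least i with s \<le> i + c_i - 1.\<close>

definition inj_start :: "nat list \<Rightarrow> nat \<Rightarrow> nat" where
  "inj_start c s = (LEAST i. s < i + c ! i)"

definition is_injective :: "nat list \<Rightarrow> nat \<times> nat \<Rightarrow> bool" where
  "is_injective c M \<longleftrightarrow> 1 \<le> snd M \<and> inj_start c (fst M + snd M - 1) = fst M"

text \<open>Cosyzygy: cokernel of the injective envelope M \<rightarrow> I(soc M), i.e. I(s)/M.\<close>

definition cosyz :: "nat list \<Rightarrow> nat \<times> nat \<Rightarrow> nat \<times> nat" where
  "cosyz c M = (let i0 = inj_start c (fst M + snd M - 1) in (i0, fst M - i0))"

definition inj_dim_eq :: "nat list \<Rightarrow> nat \<times> nat \<Rightarrow> nat \<Rightarrow> bool" where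
  "inj_dim_eq c M d \<longleftrightarrow>
     (\<forall>j<d. \<not> is_injective c ((cosyz c ^^ j) M)) \<and> is_injective c ((cosyz c ^^ d) M)"

definition dyck_height :: "nat list \<Rightarrow> nat \<Rightarrow> nat" where
  "dyck_height c x = (let n = length c - 1 in
     Max {k - 1 | i k. i \<le> n \<and> 1 \<le> k \<and> k \<le> c ! i \<and> 2*i + k - 1 = 2*n - x})"

definition up_step :: "nat list \<Rightarrow> nat \<Rightarrow> bool" where
  "up_step c x \<longleftrightarrow> dyck_height c (Suc x) = dyck_height c x + 1"

definition valleys :: "nat list \<Rightarrow> nat set" where
  "valleys c = {p. 0 < p \<and> p < 2 * (length c - 1) \<and> \<not> up_step c (p - 1) \<and> up_step c p}"

definition ups_before :: "nat list \<Rightarrow> nat \<Rightarrow> nat" where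
  "ups_before c p = card {y. y < p \<and> up_step c y}"

definition downs_before :: "nat list \<Rightarrow> nat \<Rightarrow> nat" where
  "downs_before c p = card {y. y < p \<and> \<not> up_step c y}"

text \<open>Billey-Jockusch-Stanley: pi is the permutation of [n] associated to the Dyck path of c.\<close>

definition BJS_perm :: "nat list \<Rightarrow> (nat \<Rightarrow> nat) \<Rightarrow> bool" where
  "BJS_perm c \<pi> \<longleftrightarrow> (let n = length c - 1;
       Ds = downs_before c ` valleys c in
     \<pi> permutes {1..n} \<and>
     (\<forall>p \<in> valleys c. \<pi> (downs_before c p) = ups_before c p + 1) \<and>
     (\<forall>x y. x \<in> {1..n} - Ds \<longrightarrow> y \<in> {1..n} - Ds \<longrightarrow> x < y \<longrightarrow> \<pi> x < \<pi> y))"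

definition avoids_321 :: "nat \<Rightarrow> (nat \<Rightarrow> nat) \<Rightarrow> bool" where
  "avoids_321 n \<pi> \<longleftrightarrow> \<not> (\<exists>i j k. 1 \<le> i \<and> i < j \<and> j < k \<and> k \<le> n \<and> \<pi> k < \<pi> j \<and> \<pi> j < \<pi> i)"

end

theory Submission
  imports Defs
begin

text \<open>Put f(j) = j + c_j, so that e_jA has socle S_(f(j) - 1), and call j < n a valley index
  if f(j) < f(j+1).  Computing injective envelopes, P_i has injective dimension one iff
  i > 0 and no valley index j satisfies j < i \<le> f(j).  On the Dyck path the valleys are
  indexed by the same j, with A_j + 1 = n - j and D_j = n + 1 - f(j); so \<pi> sends
  n + 1 - f(j) to n - j and is increasing elsewhere.  Such a permutation fixes exactly the
  points not lying under any arc [D_j, A_j + 1], and the reflection i \<mapsto> n + 1 - i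
  identifies these with the projectives of injective dimension one.\<close>

section \<open>Permutations increasing off a set of arcs\<close>

lemma card_less_image_strict_mono_on:
  fixes f :: "'a::linorder \<Rightarrow> 'b::linorder"
  assumes "strict_mono_on S f" and "y \<in> S"
  shows "card {t \<in> f ` S. t < f y} = card {s \<in> S. s < y}"
proof -
  have "{t \<in> f ` S. t < f y} = f ` {s \<in> S. s < y}"
    using assms by (auto simp: strict_mono_on_less)
  moreover have "inj_on f {s \<in> S. s < y}"
    using strict_mono_on_imp_inj_on[OF assms(1)] by (rule inj_on_subset) auto
  ultimately show ?thesis by (simp add: card_image)
qed

lemma card_less_eq_imp_eq:
  fixes a b :: "'a::linorder"
  assumes "finite T" "a \<in> T" "b \<in> T" and "card {t \<in> T. t < a} = card {t \<in> T. t < b}"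
  shows "a = b"
proof (rule ccontr)
  have less: "card {t \<in> T. t < u} < card {t \<in> T. t < v}" if "u \<in> T" "u < v" for u v
    using that \<open>finite T\<close> by (intro psubset_card_mono) auto
  assume "a \<noteq> b"
  then show False
    using less[of a b] less[of b a] assms by (cases a b rule: linorder_cases) auto
qed

lemma card_less_Diff_add:
  assumes "X \<subseteq> {1..n}" and "x \<le> Suc n"
  shows "card {s \<in> {1..n} - X. s < x} + card {e \<in> X. e < x} = x - 1"
proof -
  have "{s \<in> {1..n} - X. s < x} \<union> {e \<in> X. e < x} = {1..<x}"
    using assms by auto
  moreover have "finite {s \<in> {1..n} - X. s < x}" "finite {e \<in> X. e < x}"
    using assms by (auto intro: finite_subset[of _ "{1..n}"])
  ultimately show ?thesis
    by (metis (no_types, lifting) card_Un_disjoint card_atLeastLessThan disjoint_iff mem_Collect_eq Diff_iff)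
qed

lemma uncovered_by_arcs_iff:
  fixes \<pi> :: "'a::linorder \<Rightarrow> 'a"
  assumes arcs: "\<And>e. e \<in> E \<Longrightarrow> e < \<pi> e" and "x \<notin> E"
  shows "\<not> (\<exists>e\<in>E. e \<le> x \<and> x \<le> \<pi> e) \<longleftrightarrow>
    x \<notin> \<pi> ` E \<and> {e \<in> E. \<pi> e < x} = {e \<in> E. e < x}"
proof
  assume uncovered: "\<not> (\<exists>e\<in>E. e \<le> x \<and> x \<le> \<pi> e)"
  have "x \<notin> \<pi> ` E"
    using uncovered arcs by (auto intro: less_imp_le)
  moreover have "{e \<in> E. \<pi> e < x} = {e \<in> E. e < x}"
    using uncovered arcs by (auto simp: not_le intro: less_trans)
  ultimately show "x \<notin> \<pi> ` E \<and> {e \<in> E. \<pi> e < x} = {e \<in> E. e < x}" ..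
next
  assume "x \<notin> \<pi> ` E \<and> {e \<in> E. \<pi> e < x} = {e \<in> E. e < x}"
  then have below: "\<pi> e < x" if "e \<in> E" "e < x" for e
    using that by blast
  show "\<not> (\<exists>e\<in>E. e \<le> x \<and> x \<le> \<pi> e)"
  proof
    assume "\<exists>e\<in>E. e \<le> x \<and> x \<le> \<pi> e"
    then obtain e where e: "e \<in> E" "e \<le> x" "x \<le> \<pi> e"
      by blast
    then have "e < x"
      using \<open>x \<notin> E\<close> by (auto simp: le_less)
    with e below show False
      by (meson leD)
  qed
qed

text \<open>Off E, the points x and \<pi> x are compared through their ranks among the points
  outside E and outside \<pi> ` E respectively.\<close>

lemma permutes_fixpoint_iff_uncovered:
  fixes \<pi> :: "nat \<Rightarrow> nat"
  assumes perm: "\<pi> permutes {1..n}" and E: "E \<subseteq> {1..n}"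
    and arcs: "\<And>e. e \<in> E \<Longrightarrow> e < \<pi> e"
    and mono: "strict_mono_on ({1..n} - E) \<pi>"
    and x: "x \<in> {1..n}"
  shows "\<pi> x = x \<longleftrightarrow> \<not> (\<exists>e\<in>E. e \<le> x \<and> x \<le> \<pi> e)"
proof (cases "x \<in> E")
  case True
  then show ?thesis using arcs[OF True] by auto
next
  case False
  define T where "T = \<pi> ` ({1..n} - E)"
  have inj: "inj_on \<pi> {1..n}" and img: "\<pi> ` {1..n} = {1..n}"
    using perm by (auto simp: permutes_inj_on permutes_image)
  have \<pi>E: "\<pi> ` E \<subseteq> {1..n}"
    using E img by auto
  have T_eq: "T = {1..n} - \<pi> ` E"
    unfolding T_def using inj_on_image_set_diff[OF inj _ E] img by auto
  have "card {e \<in> \<pi> ` E. e < x} = card {e \<in> E. \<pi> e < x}"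
  proof -
    have "{e \<in> \<pi> ` E. e < x} = \<pi> ` {e \<in> E. \<pi> e < x}" by auto
    moreover have "inj_on \<pi> {e \<in> E. \<pi> e < x}"
      using E by (blast intro: inj_on_subset[OF inj])
    ultimately show ?thesis by (simp add: card_image)
  qed
  then have rank_x: "card {t \<in> T. t < x} + card {e \<in> E. \<pi> e < x} = x - 1"
    using card_less_Diff_add[OF \<pi>E, of x] x unfolding T_eq by auto
  have rank_\<pi>x: "card {t \<in> T. t < \<pi> x} + card {e \<in> E. e < x} = x - 1"
    using card_less_Diff_add[OF E, of x] x False
      card_less_image_strict_mono_on[OF mono, of x] unfolding T_def by auto
  have sub: "{e \<in> E. \<pi> e < x} \<subseteq> {e \<in> E. e < x}"
    using arcs by force
  have fin: "finite {e \<in> E. e < x}" "finite T"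
    using E unfolding T_eq by (auto intro: finite_subset[of _ "{1..n}"])
  have "\<pi> x \<in> T"
    using x False unfolding T_def by auto
  then have "\<pi> x = x \<longleftrightarrow> x \<in> T \<and> card {t \<in> T. t < x} = card {t \<in> T. t < \<pi> x}"
    using card_less_eq_imp_eq[OF fin(2)] by metis
  also have "\<dots> \<longleftrightarrow> x \<notin> \<pi> ` E \<and> {e \<in> E. \<pi> e < x} = {e \<in> E. e < x}"
    using rank_x rank_\<pi>x card_subset_eq[OF fin(1) sub] x unfolding T_eq by auto
  also have "\<dots> \<longleftrightarrow> \<not> (\<exists>e\<in>E. e \<le> x \<and> x \<le> \<pi> e)"
    by (rule uncovered_by_arcs_iff[OF arcs False, symmetric])
  finally show ?thesis .
qed

section \<open>Injective dimension of the indecomposable projectives\<close>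

lemma exists_ascent_between:
  fixes f :: "nat \<Rightarrow> 'a::linorder"
  assumes "k < i" and "f k < f i"
  shows "\<exists>j. k \<le> j \<and> j < i \<and> f j < f (Suc j)"
  using assms
proof (induction i)
  case 0
  then show ?case by simp
next
  case (Suc i)
  show ?case
  proof (cases "f i < f (Suc i)")
    case True
    with Suc.prems show ?thesis by (auto simp: less_Suc_eq_le)
  next
    case False
    with Suc.prems have "k < i" and "f k < f i"
      by (auto simp: less_Suc_eq)
    with Suc.IH show ?thesis using less_SucI by blast
  qed
qed

locale kupisch_series =
  fixes c :: "nat list" and n :: nat
  assumes kupisch: "kupisch c" and length_c: "length c = Suc n"
begin

lemma last_entry: "c ! n = 1"
  using kupisch length_c unfolding kupisch_def by (metis diff_Suc_1 last_conv_nth)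

lemma entry_ge_2: "j < n \<Longrightarrow> 2 \<le> c ! j"
  using kupisch length_c unfolding kupisch_def by auto

lemma entry_pos: "j \<le> n \<Longrightarrow> 0 < c ! j"
  using entry_ge_2[of j] last_entry by (cases "j = n") auto

lemma entry_le_Suc: "j < n \<Longrightarrow> c ! j \<le> Suc (c ! Suc j)"
  using kupisch length_c unfolding kupisch_def by auto

text \<open>The composition factors of e_jA are S_j, ..., S_(proj_end j - 1).\<close>

definition proj_end :: "nat \<Rightarrow> nat" where
  "proj_end j = j + c ! j"

lemma proj_end_mono: "j \<le> k \<Longrightarrow> k \<le> n \<Longrightarrow> proj_end j \<le> proj_end k"
  using lift_Suc_mono_le_ivl[of "{..<n}" proj_end j k] entry_le_Suc
  unfolding proj_end_def by fastforce

lemma proj_end_last: "proj_end n = Suc n"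
  using last_entry unfolding proj_end_def by simp

lemma less_proj_end: "j \<le> n \<Longrightarrow> j < proj_end j"
  using entry_pos unfolding proj_end_def by simp

lemma Suc_Suc_le_proj_end: "j < n \<Longrightarrow> Suc (Suc j) \<le> proj_end j"
  using entry_ge_2 unfolding proj_end_def by simp

lemma proj_end_le: "j \<le> n \<Longrightarrow> proj_end j \<le> Suc n"
  using proj_end_mono[of j n] proj_end_last by simp

lemma inj_start_le_iff:
  assumes "s \<le> n" and "k \<le> n"
  shows "inj_start c s \<le> k \<longleftrightarrow> s < proj_end k"
proof
  have "s < proj_end (inj_start c s)"
    using less_proj_end[OF assms(1)] unfolding inj_start_def proj_end_def by (rule LeastI)
  then show "inj_start c s \<le> k \<Longrightarrow> s < proj_end k"
    using proj_end_mono[OF _ assms(2)] by (meson order_less_le_trans)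
next
  show "s < proj_end k \<Longrightarrow> inj_start c s \<le> k"
    unfolding inj_start_def proj_end_def by (rule Least_le)
qed

lemma inj_start_eq_iff:
  assumes "s \<le> s'" and "s' \<le> n"
  shows "inj_start c s = inj_start c s' \<longleftrightarrow> \<not> (\<exists>k\<le>n. s < proj_end k \<and> proj_end k \<le> s')"
proof -
  have start_le: "inj_start c t \<le> n" if "t \<le> n" for t
    using inj_start_le_iff[OF that order_refl] proj_end_last that by simp
  show ?thesis
  proof
    assume eq: "inj_start c s = inj_start c s'"
    show "\<not> (\<exists>k\<le>n. s < proj_end k \<and> proj_end k \<le> s')"
    proof
      assume "\<exists>k\<le>n. s < proj_end k \<and> proj_end k \<le> s'"
      then obtain k where k: "k \<le> n" "s < proj_end k" "proj_end k \<le> s'"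
        by auto
      then have "s' < proj_end k"
        using inj_start_le_iff[of s k] inj_start_le_iff[of s' k] eq assms by simp
      with k show False by simp
    qed
  next
    assume none: "\<not> (\<exists>k\<le>n. s < proj_end k \<and> proj_end k \<le> s')"
    define k where "k = inj_start c s"
    have k: "k \<le> n" "s < proj_end k"
      using start_le inj_start_le_iff[of s k] assms unfolding k_def by auto
    then have "inj_start c s' \<le> k"
      using none inj_start_le_iff[of s' k] assms by auto
    moreover have "k \<le> inj_start c s'"
      using inj_start_le_iff[of s' "inj_start c s'"] inj_start_le_iff[of s "inj_start c s'"] start_le assms
      unfolding k_def by simp
    ultimately show "inj_start c s = inj_start c s'"
      unfolding k_def by simp
  qed
qed

text \<open>With q = inj_start c (proj_end i - 1), P_i is injective iff q = i, and its cosyzygy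
  (q, i - q) is injective iff q is also the start of the injective envelope of S_(i-1).\<close>

lemma proj_inj_dim_one_iff:
  assumes "i \<le> n"
  shows "inj_dim_eq c (i, c ! i) 1 \<longleftrightarrow>
    0 < i \<and> \<not> (\<exists>k\<le>n. i \<le> proj_end k \<and> proj_end k < proj_end i)"
proof -
  define q where "q = inj_start c (proj_end i - 1)"
  have soc: "proj_end i - 1 \<le> n" "i \<le> proj_end i - 1"
    using proj_end_le[OF assms] less_proj_end[OF assms] by auto
  have "q \<le> i"
    unfolding q_def using inj_start_le_iff[OF soc(1) assms] less_proj_end[OF assms] by simp
  moreover have "inj_start c (i - 1) < i" if "0 < i"
  proof -
    have "inj_start c (i - 1) \<le> i - 1"
      using inj_start_le_iff[of "i - 1" "i - 1"] less_proj_end[of "i - 1"] assms by simp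
    with that show ?thesis by simp
  qed
  ultimately have "inj_dim_eq c (i, c ! i) 1 \<longleftrightarrow> 0 < i \<and> inj_start c (i - 1) = q"
    using entry_pos[OF assms]
    unfolding inj_dim_eq_def is_injective_def cosyz_def q_def proj_end_def
    by (auto simp: Let_def less_Suc_eq)
  also have "\<dots> \<longleftrightarrow> 0 < i \<and> \<not> (\<exists>k\<le>n. i - 1 < proj_end k \<and> proj_end k \<le> proj_end i - 1)"
    unfolding q_def using inj_start_eq_iff[of "i - 1" "proj_end i - 1"] soc by auto
  also have "\<dots> \<longleftrightarrow> 0 < i \<and> \<not> (\<exists>k\<le>n. i \<le> proj_end k \<and> proj_end k < proj_end i)"
    using soc by (auto simp: less_eq_Suc_le)
  finally show ?thesis .
qed

definition valley_indices :: "nat set" where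
  "valley_indices = {j. j < n \<and> proj_end j < proj_end (Suc j)}"

lemma valley_index_covering_iff:
  assumes "i \<le> n"
  shows "(\<exists>j\<in>valley_indices. j < i \<and> i \<le> proj_end j) \<longleftrightarrow>
    (\<exists>k\<le>n. i \<le> proj_end k \<and> proj_end k < proj_end i)"
proof
  assume "\<exists>j\<in>valley_indices. j < i \<and> i \<le> proj_end j"
  then obtain j where "j < n" "proj_end j < proj_end (Suc j)" "j < i" "i \<le> proj_end j"
    unfolding valley_indices_def by auto
  then show "\<exists>k\<le>n. i \<le> proj_end k \<and> proj_end k < proj_end i"
    using proj_end_mono[of "Suc j" i] assms by (intro exI[of _ j]) auto
next
  assume "\<exists>k\<le>n. i \<le> proj_end k \<and> proj_end k < proj_end i"
  then obtain k where k: "k \<le> n" "i \<le> proj_end k" "proj_end k < proj_end i"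
    by auto
  then have "k < i"
    using proj_end_mono[of i k] assms by (meson not_le not_less_iff_gr_or_eq leD)
  with k obtain j where "k \<le> j" "j < i" "proj_end j < proj_end (Suc j)"
    using exists_ascent_between[of k i proj_end] by auto
  then show "\<exists>j\<in>valley_indices. j < i \<and> i \<le> proj_end j"
    using k assms proj_end_mono[of k j] unfolding valley_indices_def
    by (intro bexI[of _ j]) auto
qed

section \<open>The Dyck path\<close>

text \<open>The projective e_jA is the vertex (j, c_j) of the top boundary of the
  Auslander-Reiten quiver, at abscissa 2n - proj_coord j.\<close>

definition proj_coord :: "nat \<Rightarrow> nat" where
  "proj_coord j = 2 * j + c ! j - 1"

lemma proj_coord_Suc:
  "j < n \<Longrightarrow> proj_coord (Suc j) = Suc (proj_coord j) + (proj_end (Suc j) - proj_end j)"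
  using entry_pos[of j] entry_pos[of "Suc j"] entry_le_Suc[of j]
  unfolding proj_coord_def proj_end_def by simp

lemma strict_mono_proj_coord: "strict_mono_on {..n} proj_coord"
proof (rule strict_mono_onI)
  fix j k assume "j \<in> {..n}" "k \<in> {..n}" "j < k"
  then show "proj_coord j < proj_coord k"
    using lift_Suc_mono_less_ivl[of "{..<n}" proj_coord j k] proj_coord_Suc by fastforce
qed

lemma proj_coord_less_iff: "j \<le> n \<Longrightarrow> k \<le> n \<Longrightarrow> proj_coord j < proj_coord k \<longleftrightarrow> j < k"
  using strict_mono_on_less[OF strict_mono_proj_coord] by simp

lemma proj_coord_le_iff: "j \<le> n \<Longrightarrow> k \<le> n \<Longrightarrow> proj_coord j \<le> proj_coord k \<longleftrightarrow> j \<le> k"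
  using strict_mono_on_less_eq[OF strict_mono_proj_coord] by simp

lemma proj_coord_last: "proj_coord n = 2 * n"
  using last_entry unfolding proj_coord_def by simp

lemma proj_coord_less_double: "j < n \<Longrightarrow> proj_coord j < 2 * n"
  using proj_coord_less_iff[of j n] proj_coord_last by simp

text \<open>The highest vertex of the column with 2n - x = y is the module (top_index y, y - 2 top_index y + 1).\<close>

definition top_index :: "nat \<Rightarrow> nat" where
  "top_index y = (LEAST j. y \<le> proj_coord j)"

lemma top_index_le_iff:
  assumes "y \<le> 2 * n" and "k \<le> n"
  shows "top_index y \<le> k \<longleftrightarrow> y \<le> proj_coord k"
proof
  have "y \<le> proj_coord n"
    using assms(1) proj_coord_last by simp
  then have "y \<le> proj_coord (top_index y)"
    unfolding top_index_def by (rule LeastI)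
  moreover assume "top_index y \<le> k"
  then have "proj_coord (top_index y) \<le> proj_coord k"
    using proj_coord_le_iff[of "top_index y" k] assms(2) by simp
  ultimately show "y \<le> proj_coord k"
    by simp
next
  show "y \<le> proj_coord k \<Longrightarrow> top_index y \<le> k"
    unfolding top_index_def by (rule Least_le)
qed

lemma top_index_le: "y \<le> 2 * n \<Longrightarrow> top_index y \<le> n"
  using top_index_le_iff[of y n] proj_coord_last by simp

lemma top_index_proj_coord: "j \<le> n \<Longrightarrow> top_index (proj_coord j) = j"
  using top_index_le_iff[of "proj_coord j"] proj_coord_le_iff proj_coord_last
  by (metis le_antisym order_refl)

lemma double_top_index_le:
  assumes "y \<le> 2 * n"
  shows "2 * top_index y \<le> y"
proof (cases "top_index y")
  case (Suc m)
  then have "m < n"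
    using top_index_le[OF assms] by simp
  then have "proj_coord m < y"
    using top_index_le_iff[OF assms, of m] Suc by simp
  with entry_ge_2[OF \<open>m < n\<close>] Suc show ?thesis
    unfolding proj_coord_def by simp
qed simp

lemma top_index_Suc:
  assumes "y < 2 * n"
  shows "top_index (Suc y) =
    (if proj_coord (top_index y) = y then Suc (top_index y) else top_index y)"
proof -
  define m where "m = top_index y"
  have m: "m \<le> n" "y \<le> proj_coord m"
    using top_index_le_iff[of y m] top_index_le assms unfolding m_def by auto
  show ?thesis
  proof (cases "proj_coord m = y")
    case True
    then have "m < n"
      using m assms proj_coord_last by (cases "m = n") auto
    then have "Suc y \<le> proj_coord (Suc m)" and "\<not> Suc y \<le> proj_coord m"
      using proj_coord_less_iff[of m "Suc m"] True by auto
    then have "top_index (Suc y) = Suc m"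
      using top_index_le_iff[of "Suc y"] \<open>m < n\<close> m assms
      by (metis Suc_leI le_antisym not_less_eq_eq)
    with True show ?thesis unfolding m_def by simp
  next
    case False
    then have "top_index (Suc y) \<le> m"
      using top_index_le_iff[of "Suc y" m] m assms by simp
    moreover have "m \<le> top_index (Suc y)"
      using top_index_le_iff[of y "top_index (Suc y)"] top_index_le_iff[of "Suc y" "top_index (Suc y)"]
        top_index_le[of "Suc y"] assms unfolding m_def by simp
    ultimately show ?thesis
      using False unfolding m_def by simp
  qed
qed

lemma dyck_height_eq:
  assumes "x \<le> 2 * n"
  shows "dyck_height c x = (2 * n - x) - 2 * top_index (2 * n - x)"
proof -
  define y where "y = 2 * n - x"
  define m where "m = top_index y"
  define H where "H = {k - 1 | i k. i \<le> n \<and> 1 \<le> k \<and> k \<le> c ! i \<and> 2 * i + k - 1 = y}"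
  have y: "y \<le> 2 * n"
    unfolding y_def by simp
  have m: "m \<le> n" "y \<le> proj_coord m" "2 * m \<le> y"
    using top_index_le_iff[OF y, of m] top_index_le[OF y] double_top_index_le[OF y]
    unfolding m_def by auto
  have "dyck_height c x = Max H"
    using length_c unfolding dyck_height_def H_def y_def by simp
  moreover have "y - 2 * m \<in> H"
    using m entry_pos[of m] unfolding H_def proj_coord_def
    by (intro CollectI exI[of _ m] exI[of _ "y - 2 * m + 1"]) auto
  moreover have "h \<le> y - 2 * m" if "h \<in> H" for h
  proof -
    obtain i k where ik: "h = k - 1" "i \<le> n" "1 \<le> k" "k \<le> c ! i" "2 * i + k - 1 = y"
      using \<open>h \<in> H\<close> unfolding H_def by auto
    then have "m \<le> i"
      using top_index_le_iff[OF y ik(2)] unfolding m_def proj_coord_def by simp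
    with ik show ?thesis by simp
  qed
  moreover have "finite H"
    by (rule finite_subset[of H "{..y}"]) (auto simp: H_def)
  ultimately show ?thesis
    unfolding y_def m_def by (metis (no_types, lifting) Max_eqI)
qed

lemma up_step_iff:
  assumes "x < 2 * n"
  shows "up_step c x \<longleftrightarrow> 2 * n - Suc x \<in> proj_coord ` {..<n}"
proof -
  define y where "y = 2 * n - Suc x"
  have y: "y < 2 * n" "2 * n - x = Suc y"
    using assms unfolding y_def by auto
  have heights: "dyck_height c x = Suc y - 2 * top_index (Suc y)"
    "dyck_height c (Suc x) = y - 2 * top_index y"
    using dyck_height_eq[of x] dyck_height_eq[of "Suc x"] assms y unfolding y_def by auto
  have "up_step c x \<longleftrightarrow> proj_coord (top_index y) = y"
    using heights top_index_Suc[OF y(1)] double_top_index_le[of y] double_top_index_le[of "Suc y"] y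
    unfolding up_step_def by auto
  also have "\<dots> \<longleftrightarrow> y \<in> proj_coord ` {..<n}"
  proof
    assume "proj_coord (top_index y) = y"
    moreover have "top_index y \<noteq> n"
      using calculation y proj_coord_last by auto
    ultimately show "y \<in> proj_coord ` {..<n}"
      using top_index_le[of y] y by (metis image_eqI le_neq_implies_less lessThan_iff less_imp_le)
  qed (auto simp: top_index_proj_coord)
  finally show ?thesis
    unfolding y_def .
qed

lemma Suc_proj_coord_in_image_iff:
  assumes "j < n"
  shows "Suc (proj_coord j) \<in> proj_coord ` {..n} \<longleftrightarrow> proj_end (Suc j) = proj_end j"
proof
  assume "Suc (proj_coord j) \<in> proj_coord ` {..n}"
  then obtain k where k: "k \<le> n" "proj_coord k = Suc (proj_coord j)"
    by auto
  then have "j < k"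
    using proj_coord_less_iff[of j k] assms by simp
  moreover have "k \<le> Suc j"
    using proj_coord_le_iff[of k "Suc j"] proj_coord_Suc[OF assms] k assms by simp
  ultimately have "k = Suc j"
    by simp
  then show "proj_end (Suc j) = proj_end j"
    using k proj_coord_Suc[OF assms] proj_end_mono[of j "Suc j"] assms by simp
next
  assume "proj_end (Suc j) = proj_end j"
  then show "Suc (proj_coord j) \<in> proj_coord ` {..n}"
    using proj_coord_Suc[OF assms] assms by (intro image_eqI[of _ _ "Suc j"]) auto
qed

lemma valley_index_bounds:
  assumes "j \<in> valley_indices"
  shows "Suc (Suc (proj_coord j)) \<le> 2 * n" and "proj_end j \<le> n"
proof -
  have j: "j < n" "proj_end j < proj_end (Suc j)"
    using assms unfolding valley_indices_def by auto
  show "Suc (Suc (proj_coord j)) \<le> 2 * n"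
    using proj_coord_Suc[OF j(1)] proj_coord_le_iff[of "Suc j" n] proj_coord_last j by simp
  show "proj_end j \<le> n"
    using proj_end_le[of "Suc j"] j by simp
qed

lemma valleys_eq: "valleys c = (\<lambda>j. 2 * n - Suc (proj_coord j)) ` valley_indices"
proof (rule set_eqI, rule iffI)
  fix p assume "p \<in> valleys c"
  then have p: "0 < p" "p < 2 * n" "\<not> up_step c (p - 1)" "up_step c p"
    using length_c unfolding valleys_def by auto
  obtain j where j: "j < n" "proj_coord j = 2 * n - Suc p"
    using up_step_iff[of p] p by auto
  have "2 * n - Suc (p - 1) = Suc (proj_coord j)"
    using j p by simp
  then have "Suc (proj_coord j) \<notin> proj_coord ` {..<n}"
    using up_step_iff[of "p - 1"] p by simp
  moreover have "Suc (proj_coord j) \<noteq> proj_coord n"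
    using j p proj_coord_last by simp
  ultimately have "Suc (proj_coord j) \<notin> proj_coord ` {..n}"
    by (force simp: le_less)
  then have "proj_end j \<noteq> proj_end (Suc j)"
    using Suc_proj_coord_in_image_iff[OF j(1)] by simp
  moreover have "proj_end j \<le> proj_end (Suc j)"
    using proj_end_mono j(1) by simp
  ultimately have "j \<in> valley_indices"
    using j(1) unfolding valley_indices_def by simp
  then show "p \<in> (\<lambda>j. 2 * n - Suc (proj_coord j)) ` valley_indices"
    using j p by (intro image_eqI[of _ _ j]) auto
next
  fix p assume "p \<in> (\<lambda>j. 2 * n - Suc (proj_coord j)) ` valley_indices"
  then obtain j where j: "j \<in> valley_indices" "p = 2 * n - Suc (proj_coord j)"
    by auto
  have jn: "j < n" and ascent: "proj_end j < proj_end (Suc j)"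
    using j unfolding valley_indices_def by auto
  have bound: "Suc (Suc (proj_coord j)) \<le> 2 * n"
    using valley_index_bounds(1)[OF j(1)] .
  have p: "0 < p" "p < 2 * n"
    using j(2) bound by auto
  have "2 * n - Suc p = proj_coord j"
    using j(2) bound by simp
  then have "up_step c p"
    using up_step_iff[OF p(2)] jn by simp
  moreover have "2 * n - Suc (p - 1) = Suc (proj_coord j)"
    using j(2) bound by simp
  then have "\<not> up_step c (p - 1)"
    using up_step_iff[of "p - 1"] p Suc_proj_coord_in_image_iff[OF jn] ascent by auto
  ultimately show "p \<in> valleys c"
    using p length_c unfolding valleys_def by simp
qed

lemma ups_before_valley:
  assumes "j \<in> valley_indices"
  shows "ups_before c (2 * n - Suc (proj_coord j)) = n - Suc j"
proof -
  define p where "p = 2 * n - Suc (proj_coord j)"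
  have jn: "j < n"
    using assms unfolding valley_indices_def by auto
  have bound: "Suc (Suc (proj_coord j)) \<le> 2 * n"
    using valley_index_bounds(1)[OF assms] .
  have "{x. x < p \<and> up_step c x} = (\<lambda>k. 2 * n - Suc (proj_coord k)) ` {Suc j..<n}"
  proof (rule set_eqI, rule iffI)
    fix x assume "x \<in> {x. x < p \<and> up_step c x}"
    then have x: "x < p" "up_step c x"
      by auto
    then obtain k where k: "k < n" "proj_coord k = 2 * n - Suc x"
      using up_step_iff[of x] bound unfolding p_def by auto
    then have "proj_coord j < proj_coord k"
      using x unfolding p_def by simp
    then have "j < k"
      using proj_coord_less_iff[of j k] jn k by simp
    moreover have "x = 2 * n - Suc (proj_coord k)"
      using k x bound unfolding p_def by simp
    ultimately show "x \<in> (\<lambda>k. 2 * n - Suc (proj_coord k)) ` {Suc j..<n}"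
      using k(1) by (intro image_eqI[of _ _ k]) auto
  next
    fix x assume "x \<in> (\<lambda>k. 2 * n - Suc (proj_coord k)) ` {Suc j..<n}"
    then obtain k where "k \<in> {Suc j..<n}" and x: "x = 2 * n - Suc (proj_coord k)"
      by blast
    then have k: "j < k" "k < n"
      by auto
    have "proj_coord j < proj_coord k" "proj_coord k < 2 * n"
      using proj_coord_less_iff[of j k] proj_coord_less_double[of k] k by auto
    then have "x < p" "x < 2 * n" "2 * n - Suc x = proj_coord k"
      using x unfolding p_def by auto
    then show "x \<in> {x. x < p \<and> up_step c x}"
      using up_step_iff k by auto
  qed
  moreover have "inj_on (\<lambda>k. 2 * n - Suc (proj_coord k)) {Suc j..<n}"
  proof (rule inj_onI)
    fix k l assume kl: "k \<in> {Suc j..<n}" "l \<in> {Suc j..<n}"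
      and "2 * n - Suc (proj_coord k) = 2 * n - Suc (proj_coord l)"
    then have "proj_coord k = proj_coord l"
      using proj_coord_less_double[of k] proj_coord_less_double[of l] by simp
    with kl show "k = l"
      using proj_coord_le_iff[of k l] proj_coord_le_iff[of l k] by (simp add: le_antisym)
  qed
  ultimately show ?thesis
    unfolding ups_before_def p_def by (simp add: card_image)
qed

lemma downs_before_eq: "downs_before c p = p - ups_before c p"
proof -
  have "{y. y < p \<and> \<not> up_step c y} = {..<p} - {y. y < p \<and> up_step c y}"
    by auto
  moreover have "card ({..<p} - {y. y < p \<and> up_step c y}) = p - card {y. y < p \<and> up_step c y}"
    by (subst card_Diff_subset) auto
  ultimately show ?thesis
    unfolding downs_before_def ups_before_def by simp
qed

lemma downs_before_valley:
  assumes "j \<in> valley_indices"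
  shows "downs_before c (2 * n - Suc (proj_coord j)) = Suc n - proj_end j"
  using downs_before_eq ups_before_valley[OF assms] valley_index_bounds(1)[OF assms]
    entry_ge_2[of j] assms
  unfolding valley_indices_def proj_coord_def proj_end_def by simp

section \<open>The Billey-Jockusch-Stanley permutation\<close>

lemma BJS_perm_valley:
  assumes "BJS_perm c \<pi>" and "j \<in> valley_indices"
  shows "\<pi> (Suc n - proj_end j) = n - j"
proof -
  have "2 * n - Suc (proj_coord j) \<in> valleys c"
    using valleys_eq assms(2) by simp
  then show ?thesis
    using assms ups_before_valley[OF assms(2)] downs_before_valley[OF assms(2)]
    unfolding BJS_perm_def valley_indices_def by (auto simp: Let_def)
qed

lemma BJS_perm_strict_mono_on:
  assumes "BJS_perm c \<pi>"
  shows "strict_mono_on ({1..n} - (\<lambda>j. Suc n - proj_end j) ` valley_indices) \<pi>"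
proof -
  have "downs_before c ` valleys c = (\<lambda>j. Suc n - proj_end j) ` valley_indices"
    unfolding valleys_eq image_comp using downs_before_valley by (intro image_cong) auto
  then show ?thesis
    using assms length_c unfolding BJS_perm_def Let_def by (auto intro: strict_mono_onI)
qed

lemma BJS_perm_fixpoint_iff:
  assumes "BJS_perm c \<pi>" and x: "x \<in> {1..n}"
  shows "\<pi> x = x \<longleftrightarrow> \<not> (\<exists>j\<in>valley_indices. Suc n - proj_end j \<le> x \<and> x \<le> n - j)"
proof -
  let ?E = "(\<lambda>j. Suc n - proj_end j) ` valley_indices"
  have arc_bounds: "1 \<le> Suc n - proj_end j" "Suc n - proj_end j < n - j"
    if "j \<in> valley_indices" for j
    using valley_index_bounds(2)[OF that] Suc_Suc_le_proj_end[of j] that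
    unfolding valley_indices_def by auto
  have perm: "\<pi> permutes {1..n}"
    using assms(1) length_c unfolding BJS_perm_def Let_def by simp
  have E: "?E \<subseteq> {1..n}"
    using arc_bounds by fastforce
  have arcs: "e < \<pi> e" if "e \<in> ?E" for e
    using that arc_bounds(2) BJS_perm_valley[OF assms(1)] by auto
  have "\<pi> x = x \<longleftrightarrow> \<not> (\<exists>e\<in>?E. e \<le> x \<and> x \<le> \<pi> e)"
    by (rule permutes_fixpoint_iff_uncovered[OF perm E arcs BJS_perm_strict_mono_on[OF assms(1)] x])
  also have "(\<exists>e\<in>?E. e \<le> x \<and> x \<le> \<pi> e) \<longleftrightarrow>
      (\<exists>j\<in>valley_indices. Suc n - proj_end j \<le> x \<and> x \<le> n - j)"
    using BJS_perm_valley[OF assms(1)] by auto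
  finally show ?thesis .
qed

lemma fixpoints_eq_image_inj_dim_one:
  assumes "BJS_perm c \<pi>"
  shows "{x \<in> {1..n}. \<pi> x = x} = (\<lambda>i. Suc n - i) ` {i. i < Suc n \<and> inj_dim_eq c (i, c ! i) 1}"
proof -
  define uncovered where
    "uncovered i \<longleftrightarrow> \<not> (\<exists>j\<in>valley_indices. j < i \<and> i \<le> proj_end j)" for i
  have "\<pi> x = x \<longleftrightarrow> uncovered (Suc n - x)" if x: "x \<in> {1..n}" for x
  proof -
    have "Suc n - proj_end j \<le> x \<and> x \<le> n - j \<longleftrightarrow> j < Suc n - x \<and> Suc n - x \<le> proj_end j"
      if "j \<in> valley_indices" for j
      using valley_index_bounds(2)[OF that] that x unfolding valley_indices_def by auto
    then show ?thesis
      using BJS_perm_fixpoint_iff[OF assms x] unfolding uncovered_def by blast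
  qed
  then have "{x \<in> {1..n}. \<pi> x = x} = {x \<in> {1..n}. uncovered (Suc n - x)}"
    by blast
  also have "\<dots> = (\<lambda>i. Suc n - i) ` {i \<in> {1..n}. uncovered i}"
  proof (rule set_eqI, rule iffI)
    fix x assume "x \<in> {x \<in> {1..n}. uncovered (Suc n - x)}"
    then show "x \<in> (\<lambda>i. Suc n - i) ` {i \<in> {1..n}. uncovered i}"
      by (intro image_eqI[of _ _ "Suc n - x"]) auto
  qed auto
  also have "{i \<in> {1..n}. uncovered i} = {i. i < Suc n \<and> inj_dim_eq c (i, c ! i) 1}"
  proof -
    have "inj_dim_eq c (i, c ! i) 1 \<longleftrightarrow> 0 < i \<and> uncovered i" if "i \<le> n" for i
      using proj_inj_dim_one_iff[OF that] valley_index_covering_iff[OF that]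
      unfolding uncovered_def by simp
    then show ?thesis
      by (auto simp: less_Suc_eq_le)
  qed
  finally show ?thesis .
qed

end

theorem mainTheorem1:
  fixes n :: nat and \<pi> :: "nat \<Rightarrow> nat" and c :: "nat list"
  assumes "n \<ge> 1"
    and "\<pi> permutes {1..n}"
    and "avoids_321 n \<pi>"
    and "kupisch c" and "length c = n + 1"
    and "BJS_perm c \<pi>"
  shows "card {i. i < n + 1 \<and> inj_dim_eq c (i, c ! i) 1} = card {x \<in> {1..n}. \<pi> x = x}"
proof -
  interpret kupisch_series c n
    using assms(4,5) by unfold_locales simp_all
  have "inj_on (\<lambda>i. Suc n - i) {i. i < Suc n \<and> inj_dim_eq c (i, c ! i) 1}"
    by (rule inj_onI) auto
  then show ?thesis
    using fixpoints_eq_image_inj_dim_one[OF assms(6)] by (simp add: card_image)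
qed

end
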